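(* Let $\Phi$ be a channel matrix whose rows $P^1,\dots,P^4\in\Delta^n$ are in general position, let $Q^0$ be the equidistant point from $P^1,\dots,P^4$ with barycentric coordinate $\boldsymbol\lambda^0$, and suppose $\lambda^0_1<0$, $\lambda^0_2<0$, $\lambda^0_3\ge0$, $\lambda^0_4\ge0$. Let $Q^{1(1)}=\pi(Q^0|L(P^2,P^3,P^4))$ and $Q^{1(2)}=\pi(Q^0|L(P^1,P^3,P^4))$ with barycentric coordinates $\boldsymbol\lambda^{1(1)},\boldsymbol\lambda^{1(2)}$ about $P^1,\dots,P^4$, and suppose $\lambda^{1(2)}_1<0$. If moreover $\lambda^{1(1)}_2,\lambda^{1(1)}_3,\lambda^{1(1)}_4\ge0$, then the output distribution achieving the channel capacity is $Q^\ast=Q^{1(1)}$ and the channel capacity is $C=D(P^2\|Q^{1(1)})$.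
   Context: $\Delta^n=\{Q:Q_j>0,\sum_jQ_j=1\}$, $\bar\Delta^m=\{\boldsymbol\lambda:\lambda_i\ge0,\sum_i\lambda_i=1\}$; $D(Q\|Q')=\sum_jQ_j\log(Q_j/Q'_j)$. Rows are in general position if $P^2-P^1,\dots,P^m-P^1$ are linearly independent. $L(S^1,\dots,S^r)=\{\sum_i\lambda_iS^i:\sum_i\lambda_i=1\}\cap\Delta^n$; for such an affine subspace $L$, $\pi(Q'|L)$ is the unique $Q\in L$ minimizing $D(Q\|Q')$. The barycentric coordinate of $Q\in L(P^1,\dots,P^m)$ is the unique $\boldsymbol\lambda$ with $\sum_i\lambda_i=1$, $Q=\sum_i\lambda_iP^i$. The equidistant point is the unique $Q^0\in L(P^1,\dots,P^m)$ with all $D(P^i\|Q^0)$ equal. Mutual information $I(\boldsymbol\lambda,\Phi)=\sum_{i,j}\lambda_iP^i_j\log(P^i_j/Q_j)$ with $Q=\boldsymbol\lambda\Phi$; capacity $C=\max_{\boldsymbol\lambda\in\bar\Delta^m}I(\boldsymbol\lambda,\Phi)$; the capacity-achieving output distribution is $Q^\ast=\boldsymbol\lambda^\ast\Phi$ for a maximizer $\boldsymbol\lambda^\ast$ (unique). *)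

theory Defs
  imports "HOL-Analysis.Analysis"
begin

text \<open>Channel with rows P 1, ..., P m (indices 1..m), each a vector in real^'n.\<close>

definition open_simplex :: "(real ^ 'n) set" where
  "open_simplex = {Q. (\<forall>j. Q $ j > 0) \<and> (\<Sum>j\<in>UNIV. Q $ j) = 1}"

definition closed_simplex :: "nat \<Rightarrow> (nat \<Rightarrow> real) set" where
  "closed_simplex m = {lam. (\<forall>i\<in>{1..m}. lam i \<ge> 0) \<and> (\<Sum>i\<in>{1..m}. lam i) = 1}"

definition KL :: "real ^ 'n \<Rightarrow> real ^ 'n \<Rightarrow> real" where
  "KL Q Q' = (\<Sum>j\<in>UNIV. Q $ j * ln (Q $ j / Q' $ j))"

definition general_position :: "nat \<Rightarrow> (nat \<Rightarrow> real ^ 'n) \<Rightarrow> bool" where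
  "general_position m P \<longleftrightarrow>
     (\<forall>c. (\<Sum>i\<in>{2..m}. c i *\<^sub>R (P i - P 1)) = 0 \<longrightarrow> (\<forall>i\<in>{2..m}. c i = 0))"

definition affL :: "(nat \<Rightarrow> real ^ 'n) \<Rightarrow> nat set \<Rightarrow> (real ^ 'n) set" where
  "affL S I = {Q. \<exists>c. (\<Sum>i\<in>I. c i) = 1 \<and> Q = (\<Sum>i\<in>I. c i *\<^sub>R S i)} \<inter> open_simplex"

definition is_proj :: "real ^ 'n \<Rightarrow> (real ^ 'n) set \<Rightarrow> real ^ 'n \<Rightarrow> bool" where
  "is_proj Q' L Q \<longleftrightarrow> Q \<in> L \<and> (\<forall>R\<in>L. KL Q Q' \<le> KL R Q')"

definition is_bary :: "nat \<Rightarrow> (nat \<Rightarrow> real ^ 'n) \<Rightarrow> real ^ 'n \<Rightarrow> (nat \<Rightarrow> real) \<Rightarrow> bool" where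
  "is_bary m P Q lam \<longleftrightarrow> (\<Sum>i\<in>{1..m}. lam i) = 1 \<and> Q = (\<Sum>i\<in>{1..m}. lam i *\<^sub>R P i)"

definition is_equidistant :: "nat \<Rightarrow> (nat \<Rightarrow> real ^ 'n) \<Rightarrow> real ^ 'n \<Rightarrow> bool" where
  "is_equidistant m P Q \<longleftrightarrow> Q \<in> affL P {1..m} \<and> (\<forall>i\<in>{1..m}. \<forall>k\<in>{1..m}. KL (P i) Q = KL (P k) Q)"

definition out_dist :: "nat \<Rightarrow> (nat \<Rightarrow> real ^ 'n) \<Rightarrow> (nat \<Rightarrow> real) \<Rightarrow> real ^ 'n" where
  "out_dist m P lam = (\<Sum>i\<in>{1..m}. lam i *\<^sub>R P i)"

definition mutual_info :: "nat \<Rightarrow> (nat \<Rightarrow> real ^ 'n) \<Rightarrow> (nat \<Rightarrow> real) \<Rightarrow> real" where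
  "mutual_info m P lam =
     (\<Sum>i\<in>{1..m}. \<Sum>j\<in>UNIV. lam i * P i $ j * ln (P i $ j / out_dist m P lam $ j))"

definition capacity :: "nat \<Rightarrow> (nat \<Rightarrow> real ^ 'n) \<Rightarrow> real" where
  "capacity m P = (SUP lam\<in>closed_simplex m. mutual_info m P lam)"

definition is_capacity_achieving :: "nat \<Rightarrow> (nat \<Rightarrow> real ^ 'n) \<Rightarrow> (nat \<Rightarrow> real) \<Rightarrow> bool" where
  "is_capacity_achieving m P lam \<longleftrightarrow> lam \<in> closed_simplex m \<and>
     (\<forall>mu\<in>closed_simplex m. mutual_info m P mu \<le> mutual_info m P lam)"

end

theory Submission
  imports Defs
begin

text \<open>Write \<open>C = D(P2 || Q11)\<close>. Since \<open>Q11\<close> is the I-projection of \<open>Q0\<close> onto the face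
  \<open>L(P2, P3, P4)\<close>, the Pythagorean identity \<open>D(Pk || Q0) = D(Pk || Q11) + D(Q11 || Q0)\<close>
  holds for \<open>k = 2, 3, 4\<close>, so equidistance from \<open>Q0\<close> makes \<open>P2, P3, P4\<close> equidistant from
  \<open>Q11\<close> at divergence \<open>C\<close>. Evaluating \<open>X \<mapsto> \<Sum>j. X_j log (Q11_j / Q0_j)\<close> on the barycentric
  expansion of \<open>Q0\<close>, the negative weight \<open>lam0_1\<close> gives \<open>D(P1 || Q11) \<le> C\<close>. Now
  \<open>I(\<lambda>) = \<Sum>i. \<lambda>_i D(Pi || Q) - D(\<lambda>\<Phi> || Q)\<close> for every \<open>Q\<close>, so with \<open>Q = Q11\<close> every mutual
  information is at most \<open>C\<close>, with equality only if \<open>\<lambda>\<Phi> = Q11\<close>; and \<open>lam11\<close>, whose first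
  coordinate vanishes by general position, is a probability vector attaining \<open>C\<close>.\<close>

lemma open_simplexD:
  assumes "Q \<in> open_simplex"
  shows "0 < Q $ j" and "(\<Sum>j\<in>UNIV. Q $ j) = 1"
  using assms by (auto simp: open_simplex_def)

lemma diff_le_mult_ln_div:
  fixes q r :: real assumes "q > 0" "r > 0"
  shows "q - r \<le> q * ln (q / r)" and "r \<noteq> q \<Longrightarrow> q - r < q * ln (q / r)"
proof -
  have flip: "q * ln (q / r) = - (q * ln (r / q))"
    using assms by (simp add: ln_div algebra_simps)
  have lin: "q * (r / q - 1) = r - q" using assms by (simp add: field_simps)
  have le: "ln (r / q) \<le> r / q - 1" using assms by (intro ln_le_minus_one) simp
  then have "q * ln (r / q) \<le> q * (r / q - 1)" using assms by (intro mult_left_mono) auto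
  then show "q - r \<le> q * ln (q / r)" using flip lin by linarith
  assume "r \<noteq> q"
  then have "ln (r / q) \<noteq> r / q - 1" using assms ln_eq_minus_one[of "r / q"] by auto
  then have "q * ln (r / q) < q * (r / q - 1)"
    using le assms by (intro mult_strict_left_mono) auto
  then show "q - r < q * ln (q / r)" using flip lin by linarith
qed

lemma KL_nonneg:
  assumes "Q \<in> open_simplex" "R \<in> open_simplex"
  shows "0 \<le> KL Q R"
proof -
  have "(\<Sum>j\<in>UNIV. Q $ j - R $ j) \<le> KL Q R"
    unfolding KL_def by (intro sum_mono diff_le_mult_ln_div open_simplexD[OF assms(1)] open_simplexD[OF assms(2)])
  then show ?thesis using assms by (simp add: sum_subtractf open_simplexD)
qed

lemma KL_eq_0_imp_eq:
  assumes Q: "Q \<in> open_simplex" and R: "R \<in> open_simplex" and "KL Q R = 0"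
  shows "Q = R"
proof (rule ccontr)
  assume "Q \<noteq> R"
  then obtain j where "Q $ j \<noteq> R $ j" by (metis vec_eq_iff)
  then have "Q $ j - R $ j < Q $ j * ln (Q $ j / R $ j)"
    by (intro diff_le_mult_ln_div open_simplexD[OF Q] open_simplexD[OF R]) auto
  then have "(\<Sum>j\<in>UNIV. Q $ j - R $ j) < KL Q R"
    unfolding KL_def
    by (intro sum_strict_mono_ex1) (auto intro!: diff_le_mult_ln_div open_simplexD[OF Q] open_simplexD[OF R])
  then show False using assms by (simp add: sum_subtractf open_simplexD)
qed

lemma KL_change_reference:
  fixes X Q R :: "real ^ 'n"
  assumes "\<And>j. 0 < X $ j" "\<And>j. 0 < Q $ j" "\<And>j. 0 < R $ j"
  shows "KL X R = KL X Q + (\<Sum>j\<in>UNIV. X $ j * ln (Q $ j / R $ j))"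
  unfolding KL_def sum.distrib[symmetric]
proof (intro sum.cong refl)
  fix j
  show "X $ j * ln (X $ j / R $ j) = X $ j * ln (X $ j / Q $ j) + X $ j * ln (Q $ j / R $ j)"
    using assms(1)[of j] assms(2)[of j] assms(3)[of j] by (simp add: ln_div algebra_simps)
qed

lemma convex_step_pos:
  fixes q p t m :: real
  assumes "0 < q" "0 < p" "p \<le> 1" "m \<le> q" "\<bar>t\<bar> < min m 1"
  shows "0 < (1 - t) * q + t * p"
proof (cases "t \<ge> 0")
  case True
  then show ?thesis using assms by (simp add: add_pos_nonneg)
next
  case False
  \<comment> \<open>\<open>(1 - t) q + t p \<ge> q + t > 0\<close> because \<open>p \<le> 1\<close> and \<open>-t < m \<le> q\<close>\<close>
  have "t * p \<ge> t" using False assms(3) mult_left_mono_neg[of p 1 t] by simp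
  moreover have "- t * q \<ge> 0" using False assms(1) by (simp add: mult_le_0_iff)
  ultimately show ?thesis using assms(4,5) by (simp add: algebra_simps abs_less_iff)
qed

lemma affL_shift_towards_vertex:
  fixes P :: "nat \<Rightarrow> real ^ 'n"
  assumes Q: "Q \<in> affL P I" and fin: "finite I" and k: "k \<in> I" and Pk: "P k \<in> open_simplex"
  obtains d where "0 < d" "\<And>t. \<bar>t\<bar> < d \<Longrightarrow> Q + t *\<^sub>R (P k - Q) \<in> affL P I"
proof
  from Q obtain c where c1: "(\<Sum>i\<in>I. c i) = 1" and cQ: "Q = (\<Sum>i\<in>I. c i *\<^sub>R P i)"
    and Qs: "Q \<in> open_simplex"
    unfolding affL_def by auto
  define m where "m = Min (range (\<lambda>j. Q $ j))"
  have m_pos: "0 < m" unfolding m_def using open_simplexD(1)[OF Qs] by (subst Min_gr_iff) auto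
  have m_le: "m \<le> Q $ j" for j unfolding m_def by (rule Min_le) auto
  have Pk_le: "P k $ j \<le> 1" for j
    using member_le_sum[of j UNIV "\<lambda>j. P k $ j"] open_simplexD[OF Pk] by (simp add: less_imp_le)
  show "0 < min m 1" using m_pos by simp
  fix t :: real assume t: "\<bar>t\<bar> < min m 1"
  define x where "x = Q + t *\<^sub>R (P k - Q)"
  have x_eq: "x $ j = (1 - t) * Q $ j + t * P k $ j" for j by (simp add: x_def algebra_simps)
  have "0 < x $ j" for j
    unfolding x_eq using open_simplexD(1)[OF Qs] open_simplexD(1)[OF Pk] Pk_le m_le t
    by (rule convex_step_pos[where m = m])
  moreover have "(\<Sum>j\<in>UNIV. x $ j) = 1"
    using open_simplexD(2)[OF Qs] open_simplexD(2)[OF Pk]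
    by (simp add: x_eq sum.distrib flip: sum_distrib_left)
  moreover
  define c' where "c' i = (1 - t) * c i + (if i = k then t else 0)" for i
  have "(\<Sum>i\<in>I. c' i) = 1" using c1 fin k by (simp add: c'_def sum.distrib flip: sum_distrib_left)
  moreover have "x = (\<Sum>i\<in>I. c' i *\<^sub>R P i)"
  proof -
    have "(\<Sum>i\<in>I. c' i *\<^sub>R P i)
        = (\<Sum>i\<in>I. ((1 - t) * c i) *\<^sub>R P i + (if i = k then t *\<^sub>R P k else 0))"
      by (intro sum.cong) (auto simp: c'_def scaleR_add_left)
    also have "\<dots> = (1 - t) *\<^sub>R Q + t *\<^sub>R P k"
      using fin k by (simp add: sum.distrib cQ scaleR_sum_right)
    finally show ?thesis by (simp add: x_def algebra_simps)
  qed
  ultimately show "Q + t *\<^sub>R (P k - Q) \<in> affL P I"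
    unfolding x_def[symmetric] affL_def open_simplex_def by blast
qed

text \<open>The I-projection is a critical point of \<open>KL \<cdot> Q0\<close> along the line through any vertex of
  the face, and the derivative there is \<open>\<Sum>j. (P k $ j - Q $ j) * ln (Q $ j / Q0 $ j)\<close>.\<close>

lemma proj_vertex_ln_ratio:
  fixes P :: "nat \<Rightarrow> real ^ 'n"
  assumes proj: "is_proj Q0 (affL P I) Q" and Q0: "Q0 \<in> open_simplex"
    and fin: "finite I" and k: "k \<in> I" and Pk: "P k \<in> open_simplex"
  shows "(\<Sum>j\<in>UNIV. P k $ j * ln (Q $ j / Q0 $ j)) = KL Q Q0"
proof -
  have QL: "Q \<in> affL P I" and min: "\<And>R. R \<in> affL P I \<Longrightarrow> KL Q Q0 \<le> KL R Q0"
    using proj by (auto simp: is_proj_def)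
  have Qs: "Q \<in> open_simplex" using QL by (simp add: affL_def)
  define v where "v j = P k $ j - Q $ j" for j
  define g where "g t = KL (Q + t *\<^sub>R (P k - Q)) Q0" for t
  have g_eq: "g = (\<lambda>t. \<Sum>j\<in>UNIV. (Q $ j + t * v j) * ln ((Q $ j + t * v j) / Q0 $ j))"
    by (simp add: g_def KL_def v_def fun_eq_iff)
  have "((\<lambda>t. (Q $ j + t * v j) * ln ((Q $ j + t * v j) / Q0 $ j)) has_field_derivative
      (v j * ln (Q $ j / Q0 $ j) + v j)) (at 0)" for j
    using open_simplexD(1)[OF Qs, of j] open_simplexD(1)[OF Q0, of j]
    by (auto intro!: derivative_eq_intros simp: field_simps)
  then have "(g has_field_derivative (\<Sum>j\<in>UNIV. v j * ln (Q $ j / Q0 $ j) + v j)) (at 0)"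
    unfolding g_eq by (rule DERIV_sum)
  moreover obtain d where "0 < d" "\<And>t. \<bar>t\<bar> < d \<Longrightarrow> Q + t *\<^sub>R (P k - Q) \<in> affL P I"
    using affL_shift_towards_vertex[OF QL fin k Pk] by blast
  then have "\<forall>t. \<bar>0 - t\<bar> < d \<longrightarrow> g 0 \<le> g t" by (simp add: g_def min)
  ultimately have "(\<Sum>j\<in>UNIV. v j * ln (Q $ j / Q0 $ j) + v j) = 0"
    using DERIV_local_min \<open>0 < d\<close> by blast
  moreover have "(\<Sum>j\<in>UNIV. v j) = 0"
    using open_simplexD(2)[OF Qs] open_simplexD(2)[OF Pk] by (simp add: v_def sum_subtractf)
  ultimately show ?thesis by (simp add: sum.distrib v_def left_diff_distrib sum_subtractf KL_def)
qed

lemma KL_pythagoras: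
  fixes P :: "nat \<Rightarrow> real ^ 'n"
  assumes proj: "is_proj Q0 (affL P I) Q" and Q0: "Q0 \<in> open_simplex"
    and fin: "finite I" and k: "k \<in> I" and Pk: "P k \<in> open_simplex"
  shows "KL (P k) Q0 = KL (P k) Q + KL Q Q0"
proof -
  have Qs: "Q \<in> open_simplex" using proj by (simp add: is_proj_def affL_def)
  show ?thesis
    using KL_change_reference[of "P k" Q Q0] proj_vertex_ln_ratio[OF assms]
      open_simplexD(1)[OF Pk] open_simplexD(1)[OF Q0] open_simplexD(1)[OF Qs]
    by simp
qed

text \<open>With \<open>h j = ln (Q $ j / Q0 $ j)\<close>, the linear functional \<open>X \<mapsto> \<Sum>j. X $ j * h j\<close> equals
  \<open>KL Q Q0\<close> on the face, is \<open>-KL Q0 Q \<le> KL Q Q0\<close> at \<open>Q0\<close>, and is affine along the barycentric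
  expansion of \<open>Q0\<close>; a negative weight on \<open>P k\<close> therefore forces its value at \<open>P k\<close> up.\<close>

lemma KL_proj_dropped_vertex_le:
  fixes P :: "nat \<Rightarrow> real ^ 'n"
  assumes rows: "\<forall>i\<in>{1..m}. P i \<in> open_simplex" and Q0: "Q0 \<in> open_simplex"
    and bary: "is_bary m P Q0 lam" and k: "k \<in> {1..m}" "lam k < 0"
    and proj: "is_proj Q0 (affL P ({1..m} - {k})) Q"
    and i: "i \<in> {1..m} - {k}" and equi: "KL (P k) Q0 = KL (P i) Q0"
  shows "KL (P k) Q \<le> KL (P i) Q"
proof -
  define I where "I = {1..m} - {k}"
  define f where "f X = (\<Sum>j\<in>UNIV. X $ j * ln (Q $ j / Q0 $ j))" for X :: "real ^ 'n"
  define d where "d = KL Q Q0"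
  have Qs: "Q \<in> open_simplex" using proj by (simp add: is_proj_def affL_def)
  have Pk: "P k \<in> open_simplex" using rows k by blast
  have pos: "\<And>j. 0 < Q $ j" "\<And>j. 0 < Q0 $ j" "\<And>j. 0 < P k $ j"
    using open_simplexD(1)[OF Qs] open_simplexD(1)[OF Q0] open_simplexD(1)[OF Pk] by auto
  have face: "f (P l) = d" if "l \<in> I" for l
    using proj_vertex_ln_ratio[OF proj[folded I_def] Q0 _ that] rows that
    by (simp add: f_def d_def I_def)
  have "f Q0 = - KL Q0 Q"
    unfolding f_def KL_def sum_negf[symmetric]
    using pos by (intro sum.cong refl) (simp add: ln_div algebra_simps)
  moreover have "f Q0 = (\<Sum>l\<in>{1..m}. lam l * f (P l))"
    using bary unfolding f_def is_bary_def
    by (simp add: sum_component sum_distrib_right sum_distrib_left mult.assoc sum.swap[of _ UNIV])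
  also have "\<dots> = lam k * f (P k) + (1 - lam k) * d"
  proof -
    have "(\<Sum>l\<in>I. lam l) = 1 - lam k"
      using bary k sum.remove[of "{1..m}" k lam] by (simp add: is_bary_def I_def)
    then show ?thesis
      using k sum.remove[of "{1..m}" k "\<lambda>l. lam l * f (P l)"] face
      by (simp add: I_def sum_distrib_right[symmetric])
  qed
  moreover have "0 \<le> KL Q0 Q" "0 \<le> d"
    using KL_nonneg Q0 Qs by (auto simp: d_def)
  ultimately have "lam k * (f (P k) - d) \<le> 0" by (simp add: algebra_simps)
  then have "d \<le> f (P k)" using k(2) by (simp add: mult_le_0_iff)
  moreover have "KL (P k) Q0 = KL (P k) Q + f (P k)"
    unfolding f_def using KL_change_reference pos by blast
  moreover have "KL (P i) Q0 = KL (P i) Q + d"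
    using KL_pythagoras[OF proj Q0 _ i] rows i by (simp add: d_def)
  ultimately show ?thesis using equi by linarith
qed

lemma equidistant_proj_KL:
  fixes P :: "nat \<Rightarrow> real ^ 'n"
  assumes rows: "\<forall>i\<in>{1..m}. P i \<in> open_simplex" and eq: "is_equidistant m P Q0"
    and bary: "is_bary m P Q0 lam" and k: "k \<in> {1..m}" "lam k < 0"
    and proj: "is_proj Q0 (affL P ({1..m} - {k})) Q" and i: "i \<in> {1..m} - {k}"
  shows "\<forall>l\<in>{1..m} - {k}. KL (P l) Q = KL (P i) Q"
    and "\<forall>l\<in>{1..m}. KL (P l) Q \<le> KL (P i) Q"
proof -
  have Q0: "Q0 \<in> open_simplex" using eq by (simp add: is_equidistant_def affL_def)
  have equi: "KL (P l) Q0 = KL (P i) Q0" if "l \<in> {1..m}" for l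
    using eq that i unfolding is_equidistant_def by blast
  have pythagoras: "KL (P l) Q0 = KL (P l) Q + KL Q Q0" if "l \<in> {1..m} - {k}" for l
    by (rule KL_pythagoras[OF proj Q0 _ that]) (use that rows in auto)
  show face: "\<forall>l\<in>{1..m} - {k}. KL (P l) Q = KL (P i) Q"
  proof
    fix l assume l: "l \<in> {1..m} - {k}"
    then have "KL (P l) Q0 = KL (P i) Q0" using equi by blast
    then show "KL (P l) Q = KL (P i) Q" using pythagoras[OF l] pythagoras[OF i] by simp
  qed
  have "KL (P k) Q \<le> KL (P i) Q"
    using KL_proj_dropped_vertex_le[OF rows Q0 bary k proj i equi[OF k(1)]] .
  with face show "\<forall>l\<in>{1..m}. KL (P l) Q \<le> KL (P i) Q"
    by (metis Diff_iff order.refl singletonD)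
qed

lemma general_position_bary_unique:
  fixes P :: "nat \<Rightarrow> real ^ 'n"
  assumes gp: "general_position m P" and m: "1 \<le> m"
    and a: "(\<Sum>i\<in>{1..m}. a i) = 1" and b: "(\<Sum>i\<in>{1..m}. b i) = 1"
    and ab: "(\<Sum>i\<in>{1..m}. a i *\<^sub>R P i) = (\<Sum>i\<in>{1..m}. b i *\<^sub>R P i)"
  shows "\<forall>i\<in>{1..m}. a i = b i"
proof -
  define e where "e i = a i - b i" for i
  have split: "sum g {1..m} = g 1 + sum g {2..m}" for g :: "nat \<Rightarrow> 'b::comm_monoid_add"
    using m by (simp add: sum.atLeast_Suc_atMost numeral_2_eq_2)
  have e_sum: "e 1 + (\<Sum>i\<in>{2..m}. e i) = 0"
    using a b split[of e] by (simp add: e_def sum_subtractf)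
  have e_vec: "e 1 *\<^sub>R P 1 + (\<Sum>i\<in>{2..m}. e i *\<^sub>R P i) = 0"
    using ab split[of "\<lambda>i. e i *\<^sub>R P i"] by (simp add: e_def scaleR_diff_left sum_subtractf)
  have "(\<Sum>i\<in>{2..m}. e i *\<^sub>R (P i - P 1)) = (\<Sum>i\<in>{2..m}. e i *\<^sub>R P i) - (\<Sum>i\<in>{2..m}. e i) *\<^sub>R P 1"
    by (simp add: scaleR_diff_right sum_subtractf scaleR_sum_left)
  also have "\<dots> = 0"
  proof -
    have "(\<Sum>i\<in>{2..m}. e i) = - e 1" using e_sum by linarith
    moreover have "(\<Sum>i\<in>{2..m}. e i *\<^sub>R P i) = - (e 1 *\<^sub>R P 1)"
      using e_vec by (metis add.commute eq_neg_iff_add_eq_0)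
    ultimately show ?thesis by simp
  qed
  finally have tail: "\<forall>i\<in>{2..m}. e i = 0" using gp by (simp add: general_position_def)
  then have "e 1 = 0" using e_sum by simp
  moreover have "{1..m} = insert 1 {2..m}" using m by auto
  ultimately show ?thesis using tail by (simp add: e_def)
qed

lemma bary_vanishes_off_face:
  fixes P :: "nat \<Rightarrow> real ^ 'n"
  assumes gp: "general_position m P" and k: "k \<in> {1..m}"
    and bary: "is_bary m P Q lam" and face: "Q \<in> affL P ({1..m} - {k})"
  shows "lam k = 0"
proof -
  from face obtain c where c1: "(\<Sum>i\<in>{1..m} - {k}. c i) = 1"
    and cQ: "Q = (\<Sum>i\<in>{1..m} - {k}. c i *\<^sub>R P i)"
    unfolding affL_def by auto
  define c' where "c' = c(k := 0)"
  have "(\<Sum>i\<in>{1..m}. c' i) = 1"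
    using k c1 sum.remove[of "{1..m}" k c'] by (simp add: c'_def)
  moreover have "(\<Sum>i\<in>{1..m}. c' i *\<^sub>R P i) = Q"
    using k cQ sum.remove[of "{1..m}" k "\<lambda>i. c' i *\<^sub>R P i"] by (simp add: c'_def)
  moreover have "1 \<le> m" using k by simp
  ultimately have "\<forall>i\<in>{1..m}. lam i = c' i"
    using bary general_position_bary_unique[OF gp, of lam c'] by (simp add: is_bary_def)
  then show ?thesis using k by (simp add: c'_def)
qed

lemma out_dist_in_open_simplex:
  fixes P :: "nat \<Rightarrow> real ^ 'n"
  assumes mu: "mu \<in> closed_simplex m" and rows: "\<forall>i\<in>{1..m}. P i \<in> open_simplex"
  shows "out_dist m P mu \<in> open_simplex"
proof -
  have mu_nonneg: "\<And>i. i \<in> {1..m} \<Longrightarrow> 0 \<le> mu i" and mu_sum: "(\<Sum>i\<in>{1..m}. mu i) = 1"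
    using mu by (auto simp: closed_simplex_def)
  obtain i0 where i0: "i0 \<in> {1..m}" "0 < mu i0"
  proof (rule ccontr)
    assume "\<not> thesis"
    then have "(\<Sum>i\<in>{1..m}. mu i) \<le> 0" using that by (intro sum_nonpos) force
    then show False using mu_sum by simp
  qed
  have "0 < out_dist m P mu $ j" for j
    unfolding out_dist_def sum_component vector_scaleR_component real_scaleR_def
  proof (rule sum_pos2[OF _ i0(1)])
    show "0 < mu i0 * P i0 $ j" using i0 rows open_simplexD(1)[of "P i0"] by simp
    show "0 \<le> mu i * P i $ j" if "i \<in> {1..m}" for i
      using that rows mu_nonneg open_simplexD(1)[of "P i"] by (simp add: less_imp_le)
  qed simp
  moreover have "(\<Sum>j\<in>UNIV. out_dist m P mu $ j) = 1"
  proof -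
    have "(\<Sum>j\<in>UNIV. out_dist m P mu $ j) = (\<Sum>j\<in>UNIV. \<Sum>i\<in>{1..m}. mu i * P i $ j)"
      by (simp add: out_dist_def sum_component)
    also have "\<dots> = (\<Sum>i\<in>{1..m}. mu i * (\<Sum>j\<in>UNIV. P i $ j))"
      by (subst sum.swap) (simp add: sum_distrib_left)
    also have "\<dots> = (\<Sum>i\<in>{1..m}. mu i)"
      using rows by (intro sum.cong refl) (simp add: open_simplexD(2))
    finally show ?thesis using mu_sum by simp
  qed
  ultimately show ?thesis by (simp add: open_simplex_def)
qed

lemma mutual_info_decompose:
  fixes P :: "nat \<Rightarrow> real ^ 'n"
  assumes mu: "mu \<in> closed_simplex m" and rows: "\<forall>i\<in>{1..m}. P i \<in> open_simplex"
    and Q: "Q \<in> open_simplex"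
  shows "mutual_info m P mu = (\<Sum>i\<in>{1..m}. mu i * KL (P i) Q) - KL (out_dist m P mu) Q"
proof -
  define R where "R = out_dist m P mu"
  have R_pos: "\<And>j. 0 < R $ j" using out_dist_in_open_simplex[OF mu rows] open_simplexD(1) by (simp add: R_def)
  have "mutual_info m P mu = (\<Sum>i\<in>{1..m}. \<Sum>j\<in>UNIV. mu i * P i $ j * ln (P i $ j / Q $ j)
          - mu i * P i $ j * ln (R $ j / Q $ j))"
    unfolding mutual_info_def R_def[symmetric]
  proof (intro sum.cong refl)
    fix i j assume "i \<in> {1..m}"
    then have "0 < P i $ j" using rows open_simplexD(1)[of "P i"] by simp
    then show "mu i * P i $ j * ln (P i $ j / R $ j)
        = mu i * P i $ j * ln (P i $ j / Q $ j) - mu i * P i $ j * ln (R $ j / Q $ j)"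
      using R_pos[of j] open_simplexD(1)[OF Q, of j] by (simp add: ln_div algebra_simps)
  qed
  also have "\<dots> = (\<Sum>i\<in>{1..m}. mu i * KL (P i) Q)
      - (\<Sum>j\<in>UNIV. \<Sum>i\<in>{1..m}. mu i * P i $ j * ln (R $ j / Q $ j))"
    by (simp add: sum_subtractf KL_def sum_distrib_left mult.assoc) (rule sum.swap)
  also have "(\<Sum>j\<in>UNIV. \<Sum>i\<in>{1..m}. mu i * P i $ j * ln (R $ j / Q $ j)) = KL R Q"
    by (simp add: KL_def R_def out_dist_def sum_component sum_distrib_right)
  finally show ?thesis by (simp add: R_def)
qed

text \<open>The sufficiency half of the Kuhn--Tucker conditions for channel capacity.\<close>

lemma capacity_eq_max_KL:
  fixes P :: "nat \<Rightarrow> real ^ 'n"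
  assumes rows: "\<forall>i\<in>{1..m}. P i \<in> open_simplex" and Q: "Q \<in> open_simplex"
    and bound: "\<forall>i\<in>{1..m}. KL (P i) Q \<le> C"
    and lam: "lam \<in> closed_simplex m" and out: "out_dist m P lam = Q"
    and tight: "\<forall>i\<in>{1..m}. lam i \<noteq> 0 \<longrightarrow> KL (P i) Q = C"
  shows "(\<exists>lam. is_capacity_achieving m P lam)
    \<and> (\<forall>lam. is_capacity_achieving m P lam \<longrightarrow> out_dist m P lam = Q)
    \<and> capacity m P = C"
proof -
  have upper: "mutual_info m P mu \<le> C - KL (out_dist m P mu) Q" if mu: "mu \<in> closed_simplex m" for mu
  proof -
    have "(\<Sum>i\<in>{1..m}. mu i * KL (P i) Q) \<le> (\<Sum>i\<in>{1..m}. mu i * C)"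
      using mu bound by (intro sum_mono mult_left_mono) (auto simp: closed_simplex_def)
    also have "\<dots> = C" using mu by (simp add: closed_simplex_def flip: sum_distrib_right)
    finally show ?thesis using mutual_info_decompose[OF mu rows Q] by linarith
  qed
  have upper': "mutual_info m P mu \<le> C" if mu: "mu \<in> closed_simplex m" for mu
    using upper[OF mu] KL_nonneg[OF out_dist_in_open_simplex[OF mu rows] Q] by linarith
  have "KL Q Q = 0" using open_simplexD(1)[OF Q] by (simp add: KL_def less_imp_neq[symmetric])
  then have "mutual_info m P lam = (\<Sum>i\<in>{1..m}. lam i * KL (P i) Q)"
    using mutual_info_decompose[OF lam rows Q] by (simp add: out)
  also have "\<dots> = (\<Sum>i\<in>{1..m}. lam i * C)"
    using tight by (intro sum.cong refl) (metis mult_zero_left)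
  also have "\<dots> = C" using lam by (simp add: closed_simplex_def flip: sum_distrib_right)
  finally have attained: "mutual_info m P lam = C" .
  have achieving: "is_capacity_achieving m P lam"
    using lam upper' attained by (simp add: is_capacity_achieving_def)
  moreover have "out_dist m P mu = Q" if "is_capacity_achieving m P mu" for mu
  proof -
    have mu: "mu \<in> closed_simplex m" and "C \<le> mutual_info m P mu"
      using that lam attained by (auto simp: is_capacity_achieving_def)
    then have "KL (out_dist m P mu) Q = 0"
      using upper[OF mu] KL_nonneg[OF out_dist_in_open_simplex[OF mu rows] Q] by linarith
    then show ?thesis using KL_eq_0_imp_eq[OF out_dist_in_open_simplex[OF mu rows] Q] by blast
  qed
  moreover have "capacity m P = C"
    unfolding capacity_def
    by (rule cSup_eq_maximum) (use lam attained upper' in \<open>auto intro: image_eqI[where x = lam]\<close>)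
  ultimately show ?thesis by blast
qed

theorem theorem20:
  fixes P :: "nat \<Rightarrow> real ^ 'n"
    and Q0 Q11 Q12 :: "real ^ 'n"
    and lam0 lam11 lam12 :: "nat \<Rightarrow> real"
  assumes rows: "\<forall>i\<in>{1..4}. P i \<in> open_simplex"
    and gp: "general_position 4 P"
    and eq: "is_equidistant 4 P Q0"
    and b0: "is_bary 4 P Q0 lam0"
    and s0: "lam0 1 < 0" "lam0 2 < 0" "lam0 3 \<ge> 0" "lam0 4 \<ge> 0"
    and p11: "is_proj Q0 (affL P {2, 3, 4}) Q11"
    and p12: "is_proj Q0 (affL P {1, 3, 4}) Q12"
    and b11: "is_bary 4 P Q11 lam11"
    and b12: "is_bary 4 P Q12 lam12"
    and s12: "lam12 1 < 0"
    and s11: "lam11 2 \<ge> 0" "lam11 3 \<ge> 0" "lam11 4 \<ge> 0"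
  shows "(\<exists>lam. is_capacity_achieving 4 P lam)
         \<and> (\<forall>lam. is_capacity_achieving 4 P lam \<longrightarrow> out_dist 4 P lam = Q11)
         \<and> capacity 4 P = KL (P 2) Q11"
proof -
  have face: "{2, 3, 4} = {1..4::nat} - {1}" by auto
  have proj: "is_proj Q0 (affL P ({1..4} - {1})) Q11" using p11 face by simp
  have Q11: "Q11 \<in> open_simplex" using p11 by (simp add: is_proj_def affL_def)
  have one: "1 \<in> {1..4::nat}" and two: "2 \<in> {1..4::nat} - {1}" by simp_all
  note on_face = equidistant_proj_KL(1)[OF rows eq b0 one s0(1) proj two]
  note bound = equidistant_proj_KL(2)[OF rows eq b0 one s0(1) proj two]
  have "lam11 1 = 0"
    using bary_vanishes_off_face[OF gp one b11] proj by (simp add: is_proj_def)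
  moreover have four: "{1..4::nat} = {1, 2, 3, 4}" by auto
  ultimately have "lam11 \<in> closed_simplex 4" and "out_dist 4 P lam11 = Q11"
    using s11 b11 unfolding closed_simplex_def is_bary_def out_dist_def four by simp_all
  moreover have "\<forall>i\<in>{1..4}. lam11 i \<noteq> 0 \<longrightarrow> KL (P i) Q11 = KL (P 2) Q11"
  proof (intro ballI impI)
    fix i assume "i \<in> {1..4}" "lam11 i \<noteq> 0"
    then have "i \<in> {1..4} - {1}" using \<open>lam11 1 = 0\<close> by auto
    then show "KL (P i) Q11 = KL (P 2) Q11" using on_face by blast
  qed
  ultimately show ?thesis using capacity_eq_max_KL[OF rows Q11 bound] by blast
qed

end
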